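(* Let $\mathbf{L}_1,\dots,\mathbf{L}_n$ be latent factors and $\mathbf{X}_{\mathbf{t}_1},\mathbf{Y}_{\mathbf{t}_1},\dots,\mathbf{X}_{\mathbf{t}_m},\mathbf{Y}_{\mathbf{t}_m}$ observed variables in a causal graph in which $Pa(\mathbf{X}_{\mathbf{t}_s})=\{\mathbf{L}_1,\dots,\mathbf{L}_n\}$ and $Pa(\mathbf{Y}_{\mathbf{t}_s})\subseteq\{\mathbf{L}_1,\dots,\mathbf{L}_n\}$ for all $s$. Let $\mathcal{F}$ be the smallest family of subsets of $\{\mathbf{L}_1,\dots,\mathbf{L}_n\}$ such that (1) $\emptyset, Pa(\mathbf{X}_{\mathbf{t}_1}), Pa(\mathbf{Y}_{\mathbf{t}_1}),\dots,Pa(\mathbf{X}_{\mathbf{t}_m}),Pa(\mathbf{Y}_{\mathbf{t}_m})\in\mathcal{F}$ and (2) $\mathcal{A},\mathcal{B}\in\mathcal{F}$ implies $\mathcal{A}-\mathcal{B},\ \mathcal{B}-\mathcal{A}\in\mathcal{F}$, where $\mathcal{A}-\mathcal{B}=\mathcal{A}\cap\bar{\mathcal{B}}$. Then $\{\mathbf{L}_1\},\{\mathbf{L}_2\},\dots,\{\mathbf{L}_n\}\in\mathcal{F}$ if and only if for any two distinct latent factors $\mathbf{L}_i\neq\mathbf{L}_j$, their child sets are not identical, $Ch(\mathbf{L}_i)\neq Ch(\mathbf{L}_j)$.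
   Context: $Pa(V)$ denotes the set of parents of $V$ in the causal graph. The child set $Ch(\mathbf{L}_i)$ is the set of observed variables among $\mathbf{X}_{\mathbf{t}_1},\mathbf{Y}_{\mathbf{t}_1},\dots,\mathbf{X}_{\mathbf{t}_m},\mathbf{Y}_{\mathbf{t}_m}$ that have $\mathbf{L}_i$ as a parent. *)

theory Defs
  imports Main
begin

text \<open>Latent factors L_1..L_n are represented by their indices 1..n.
  Observed variables X_{t_s}, Y_{t_s} (s = 1..m) are represented by the datatype below.\<close>

datatype obs = Xv nat | Yv nat

definition observed :: "nat \<Rightarrow> obs set" where
  "observed m = {Xv s | s. s \<in> {1..m}} \<union> {Yv s | s. s \<in> {1..m}}"

definition Ch :: "(obs \<Rightarrow> nat set) \<Rightarrow> nat \<Rightarrow> nat \<Rightarrow> obs set" where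
  "Ch pa m i = {v \<in> observed m. i \<in> pa v}"

inductive_set diffClosure :: "'a set set \<Rightarrow> 'a set set" for G :: "'a set set" where
  empty: "{} \<in> diffClosure G"
| gen: "P \<in> G \<Longrightarrow> P \<in> diffClosure G"
| diff1: "A \<in> diffClosure G \<Longrightarrow> B \<in> diffClosure G \<Longrightarrow> A - B \<in> diffClosure G"
| diff2: "A \<in> diffClosure G \<Longrightarrow> B \<in> diffClosure G \<Longrightarrow> B - A \<in> diffClosure G"

definition famF :: "(obs \<Rightarrow> nat set) \<Rightarrow> nat \<Rightarrow> nat set set" where
  "famF pa m = diffClosure (pa ` observed m)"

end

theory Submission
  imports Defs
begin

text \<open>Since A \<inter> B = A - (A - B), the closure is closed under finite intersections. As
  the full factor set {1..n} is a generator, the closure therefore contains, for each factor i,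
  the atom of i: the intersection over all parent sets g of g or of {1..n} - g, according to
  whether i \<in> g. The atom consists of the factors with the same children as i, and
  conversely no set in the closure separates two factors that no parent set separates.\<close>

lemma diffClosure_Int:
  assumes "A \<in> diffClosure G" "B \<in> diffClosure G"
  shows "A \<inter> B \<in> diffClosure G"
proof -
  have "A - (A - B) \<in> diffClosure G"
    using assms by (intro diffClosure.diff1)
  moreover have "A - (A - B) = A \<inter> B" by blast
  ultimately show ?thesis by simp
qed

lemma diffClosure_Inter:
  assumes "finite S" "S \<noteq> {}" "S \<subseteq> diffClosure G"
  shows "\<Inter>S \<in> diffClosure G"
  using assms
proof (induction S rule: finite_ne_induct)
  case (singleton A)
  then show ?case by simp
next
  case (insert A S)
  then show ?case by (simp add: diffClosure_Int)
qed

lemma diffClosure_not_separates: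
  assumes "A \<in> diffClosure G" "\<forall>g\<in>G. i \<in> g \<longleftrightarrow> j \<in> g"
  shows "i \<in> A \<longleftrightarrow> j \<in> A"
  using assms by (induction A rule: diffClosure.induct) auto

definition atom :: "'a set \<Rightarrow> 'a set set \<Rightarrow> 'a \<Rightarrow> 'a set" where
  "atom U G i = U \<inter> \<Inter>((\<lambda>g. if i \<in> g then g else U - g) ` G)"

lemma atom_in_diffClosure:
  assumes "finite G" "U \<in> G"
  shows "atom U G i \<in> diffClosure G"
proof -
  define S where "S = insert U ((\<lambda>g. if i \<in> g then g else U - g) ` G)"
  have "S \<subseteq> diffClosure G"
    unfolding S_def using assms(2) by (auto intro: diffClosure.gen diffClosure.diff1)
  moreover have "finite S" "S \<noteq> {}"
    unfolding S_def using assms(1) by auto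
  ultimately have "\<Inter>S \<in> diffClosure G"
    by (intro diffClosure_Inter)
  moreover have "atom U G i = \<Inter>S"
    unfolding atom_def S_def by simp
  ultimately show ?thesis by simp
qed

lemma mem_atom_iff:
  assumes "\<Union>G \<subseteq> U" "i \<in> U"
  shows "j \<in> atom U G i \<longleftrightarrow> j \<in> U \<and> (\<forall>g\<in>G. i \<in> g \<longleftrightarrow> j \<in> g)"
  using assms unfolding atom_def by auto

lemma singleton_in_diffClosure_iff:
  assumes "finite G" "U \<in> G" "\<Union>G \<subseteq> U" "i \<in> U"
  shows "{i} \<in> diffClosure G \<longleftrightarrow> (\<forall>j\<in>U. (\<forall>g\<in>G. i \<in> g \<longleftrightarrow> j \<in> g) \<longrightarrow> j = i)"
proof
  assume "{i} \<in> diffClosure G"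
  then show "\<forall>j\<in>U. (\<forall>g\<in>G. i \<in> g \<longleftrightarrow> j \<in> g) \<longrightarrow> j = i"
    using diffClosure_not_separates[of "{i}" G i] by blast
next
  assume "\<forall>j\<in>U. (\<forall>g\<in>G. i \<in> g \<longleftrightarrow> j \<in> g) \<longrightarrow> j = i"
  then have "atom U G i = {i}"
    using mem_atom_iff[OF assms(3,4)] assms(4) by blast
  then show "{i} \<in> diffClosure G"
    using atom_in_diffClosure[OF assms(1,2), of i] by simp
qed

lemma finite_observed: "finite (observed m)"
proof -
  have "observed m = Xv ` {1..m} \<union> Yv ` {1..m}"
    unfolding observed_def by blast
  then show ?thesis by simp
qed

lemma Ch_eq_iff:
  "Ch pa m i = Ch pa m j \<longleftrightarrow> (\<forall>g\<in>pa ` observed m. i \<in> g \<longleftrightarrow> j \<in> g)"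
  unfolding Ch_def by blast

theorem lemmaA4:
  fixes n m :: nat and pa :: "obs \<Rightarrow> nat set"
  assumes "m \<ge> 1"
    and "\<And>s. s \<in> {1..m} \<Longrightarrow> pa (Xv s) = {1..n}"
    and "\<And>s. s \<in> {1..m} \<Longrightarrow> pa (Yv s) \<subseteq> {1..n}"
  shows "(\<forall>i\<in>{1..n}. {i} \<in> famF pa m) \<longleftrightarrow>
         (\<forall>i\<in>{1..n}. \<forall>j\<in>{1..n}. i \<noteq> j \<longrightarrow> Ch pa m i \<noteq> Ch pa m j)"
proof -
  let ?G = "pa ` observed m"
  have "Xv 1 \<in> observed m"
    using assms(1) unfolding observed_def by auto
  then have top: "{1..n} \<in> ?G"
    using assms(1,2) by (intro image_eqI[of _ pa "Xv 1"]) auto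
  have sub: "\<Union>?G \<subseteq> {1..n}"
    using assms(2,3) unfolding observed_def by auto
  have "{i} \<in> famF pa m \<longleftrightarrow> (\<forall>j\<in>{1..n}. Ch pa m i = Ch pa m j \<longrightarrow> j = i)"
    if "i \<in> {1..n}" for i
    unfolding famF_def Ch_eq_iff
    by (rule singleton_in_diffClosure_iff[OF finite_imageI[OF finite_observed] top sub that])
  then show ?thesis by blast
qed

end
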